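(* Consider the two-user scalar fading multiple access channel and the low-level game described in the context. For every measurable set $D_1\subseteq(0,\infty)^2$ (the base-station strategy) and every fading distribution satisfying the standing assumptions, the low-level power allocation game induced by $D_1$ has a (pure-strategy) Nash equilibrium.
   Context: Channel: $y=\sqrt{h_1}x_1+\sqrt{h_2}x_2+z$, noise variance $\sigma^2>0$; the fading $\mathbf h=(h_1,h_2)$ is stationary ergodic with a stationary distribution on $(0,\infty)^2$ having a continuous bounded density $f$; channel state is known to all transmitters and the receiver. User $i$ has average power budget $\bar P_i>0$; its feasible set is $\mathcal F_i=\{\mathcal P_i:(0,\infty)^2\to[0,\infty)\ \text{measurable}: E[\mathcal P_i(\mathbf h)]\le\bar P_i\}$. The base station uses successive decoding: for states $(h_1,h_2)\in D_1$ it decodes user 1 first, for states in $D_1^c$ it decodes user 2 first. Given $D_1$, the low-level game has the two users as players with strategy sets $\mathcal F_1,\mathcal F_2$ and payoffs $\bar R_1(D_1,\mathcal P_1,\mathcal P_2)=\iint\tfrac12\log_2\Big(1+\frac{\mathcal P_1(h_1,h_2)h_1}{\sigma^2+\mathcal P_2(h_1,h_2)h_2\,I_{\{(h_1,h_2)\in D_1\}}}\Big)f(h_1,h_2)\,dh_1dh_2$, $\bar R_2(D_1,\mathcal P_1,\mathcal P_2)=\iint\tfrac12\log_2\Big(1+\frac{\mathcal P_2(h_1,h_2)h_2}{\sigma^2+\mathcal P_1(h_1,h_2)h_1\,I_{\{(h_1,h_2)\in D_1^c\}}}\Big)f(h_1,h_2)\,dh_1dh_2$, where $I$ is the indicator function.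 A Nash equilibrium is a pair $(\mathcal P_1^*,\mathcal P_2^* )$ such that neither user can increase its own payoff by unilaterally changing its policy within its feasible set. *)

theory Defs
  imports "HOL-Analysis.Analysis"
begin

definition state_space :: "(real \<times> real) set" where
  "state_space = {0<..} \<times> {0<..}"

definition fading_density :: "(real \<times> real \<Rightarrow> real) \<Rightarrow> bool" where
  "fading_density f \<longleftrightarrow>
     f \<in> borel_measurable borel \<and>
     (\<forall>h\<in>state_space. 0 \<le> f h) \<and>
     continuous_on state_space f \<and>
     (\<exists>B. \<forall>h\<in>state_space. \<bar>f h\<bar> \<le> B) \<and>
     (\<integral>\<^sup>+ h\<in>state_space. ennreal (f h) \<partial>lborel) = 1"

definition feasible :: "(real \<times> real \<Rightarrow> real) \<Rightarrow> real \<Rightarrow> (real \<times> real \<Rightarrow> real) \<Rightarrow> bool" where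
  "feasible f Pbar P \<longleftrightarrow>
     P \<in> borel_measurable borel \<and>
     (\<forall>h\<in>state_space. 0 \<le> P h) \<and>
     (\<integral>\<^sup>+ h\<in>state_space. ennreal (P h * f h) \<partial>lborel) \<le> ennreal Pbar"

text \<open>Average rates (possibly infinite, hence valued in ennreal) of users 1 and 2 under
  successive decoding: user 1 decoded first on D1, user 2 decoded first on the complement.\<close>
definition rate1 :: "(real \<times> real \<Rightarrow> real) \<Rightarrow> real \<Rightarrow> (real \<times> real) set
    \<Rightarrow> (real \<times> real \<Rightarrow> real) \<Rightarrow> (real \<times> real \<Rightarrow> real) \<Rightarrow> ennreal" where
  "rate1 f \<sigma>2 D1 P1 P2 =
     (\<integral>\<^sup>+ h\<in>state_space.
        ennreal (1/2 * log 2 (1 + P1 h * fst h /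
                   (\<sigma>2 + P2 h * snd h * indicator D1 h)) * f h) \<partial>lborel)"

definition rate2 :: "(real \<times> real \<Rightarrow> real) \<Rightarrow> real \<Rightarrow> (real \<times> real) set
    \<Rightarrow> (real \<times> real \<Rightarrow> real) \<Rightarrow> (real \<times> real \<Rightarrow> real) \<Rightarrow> ennreal" where
  "rate2 f \<sigma>2 D1 P1 P2 =
     (\<integral>\<^sup>+ h\<in>state_space.
        ennreal (1/2 * log 2 (1 + P2 h * snd h /
                   (\<sigma>2 + P1 h * fst h * indicator (- D1) h)) * f h) \<partial>lborel)"

definition nash_equilibrium :: "(real \<times> real \<Rightarrow> real) \<Rightarrow> real \<Rightarrow> real \<Rightarrow> real \<Rightarrow> (real \<times> real) set
    \<Rightarrow> (real \<times> real \<Rightarrow> real) \<Rightarrow> (real \<times> real \<Rightarrow> real) \<Rightarrow> bool" where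
  "nash_equilibrium f \<sigma>2 Pbar1 Pbar2 D1 P1 P2 \<longleftrightarrow>
     feasible f Pbar1 P1 \<and> feasible f Pbar2 P2 \<and>
     (\<forall>Q1. feasible f Pbar1 Q1 \<longrightarrow> rate1 f \<sigma>2 D1 Q1 P2 \<le> rate1 f \<sigma>2 D1 P1 P2) \<and>
     (\<forall>Q2. feasible f Pbar2 Q2 \<longrightarrow> rate2 f \<sigma>2 D1 P1 Q2 \<le> rate2 f \<sigma>2 D1 P1 P2)"

end

theory Submission
  imports Defs
begin

text \<open>
  Given the other user's policy, a user faces the channel 1 + P g / N with a known noise N, and
  water-filling P = max 0 (w - N / g) maximizes the Lagrangian of rate minus power / (2 ln 2 w)
  pointwise (concavity of log); when it spends the whole budget it is therefore a best response.
  So it suffices to find water levels (w1, w2) at which both users, each water-filling against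
  the other, exactly exhaust their budgets. A user decoded second sees noise only, so the joint
  policies are explicit in (w1, w2). The mean power of a user is increasing and 1-Lipschitz in its
  own level, decreasing in the other level, and on a square of positive probability it grows
  linearly in its own level unless the other user spends the power instead. Hence the level
  \<phi>(w2) at which user 1 exhausts its budget exists and is monotone in w2, likewise \<psi>(w1), and
  the monotone map \<psi> \<circ> \<phi> has a fixed point on a bounded interval.
\<close>

section \<open>Water levels of monotone mean-power maps\<close>

lemma mono_on_interval_has_fixpoint:
  fixes g :: "real \<Rightarrow> real"
  assumes "a \<le> b" and maps_into: "\<And>x. x \<in> {a..b} \<Longrightarrow> g x \<in> {a..b}"
    and "mono_on {a..b} g"
  shows "\<exists>x\<in>{a..b}. g x = x"
proof -
  define A where "A = {x\<in>{a..b}. x \<le> g x}"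
  define x where "x = Sup A"
  have "a \<in> A" using assms by (auto simp: A_def)
  have bdd: "bdd_above A" by (auto simp: A_def bdd_above_def)
  have upper: "y \<le> x" if "y \<in> A" for y
    unfolding x_def using that bdd by (rule cSup_upper)
  have x_in: "x \<in> {a..b}"
    using upper[OF \<open>a \<in> A\<close>] \<open>a \<in> A\<close> unfolding x_def by (auto simp: A_def intro!: cSup_least)
  have gx_in: "g x \<in> {a..b}" using maps_into[OF x_in] .
  have "x \<le> g x"
    unfolding x_def
  proof (rule cSup_least)
    show "A \<noteq> {}" using \<open>a \<in> A\<close> by blast
    fix y assume y: "y \<in> A"
    then have "y \<le> g y" by (simp add: A_def)
    also have "g y \<le> g x"
      using y upper[OF y] x_in \<open>mono_on {a..b} g\<close> by (auto simp: A_def mono_on_def)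
    finally show "y \<le> g (Sup A)" by (simp add: x_def)
  qed
  moreover have "g x \<le> g (g x)"
    using \<open>x \<le> g x\<close> x_in gx_in \<open>mono_on {a..b} g\<close> by (auto simp: mono_on_def)
  then have "g x \<le> x" using gx_in by (intro upper) (simp add: A_def)
  ultimately show ?thesis using x_in by (intro bexI[of _ x]) auto
qed

definition level :: "(real \<Rightarrow> real) \<Rightarrow> real \<Rightarrow> real" where
  "level G c = Sup {x. 0 \<le> x \<and> G x \<le> c}"

lemma level_bounds:
  assumes "mono G" "G 0 \<le> c" "0 \<le> B" "c < G B"
  shows "0 \<le> level G c" "level G c \<le> B"
    and "bdd_above {x. 0 \<le> x \<and> G x \<le> c}"
proof -
  have below_B: "x \<le> B" if "G x \<le> c" for x
    using that \<open>c < G B\<close> monoD[OF \<open>mono G\<close>, of B x] by fastforce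
  then show bdd: "bdd_above {x. 0 \<le> x \<and> G x \<le> c}" by (auto simp: bdd_above_def)
  show "0 \<le> level G c"
    unfolding level_def using \<open>G 0 \<le> c\<close> by (intro cSup_upper2[OF _ order_refl bdd]) simp
  show "level G c \<le> B"
    unfolding level_def using \<open>G 0 \<le> c\<close> below_B by (intro cSup_least) auto
qed

lemma level_eq:
  assumes "mono G" "1-lipschitz_on UNIV G" "G 0 \<le> c" "0 \<le> B" "c < G B"
  shows "G (level G c) = c"
proof -
  define A where "A = {x. 0 \<le> x \<and> G x \<le> c}"
  note bounds = level_bounds[OF assms(1,3-5), folded A_def]
  have step: "G y \<le> G x + (y - x)" if "x \<le> y" for x y
    using lipschitz_onD[OF assms(2), of y x] that by (simp add: dist_real_def)
  have "G (level G c) \<le> c"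
  proof (rule ccontr)
    assume "\<not> G (level G c) \<le> c"
    then have "level G c - (G (level G c) - c) < Sup A" by (simp add: level_def A_def)
    moreover have "A \<noteq> {}" using assms(3) by (auto simp: A_def)
    ultimately obtain x where x: "x \<in> A" "level G c - (G (level G c) - c) < x"
      by (rule less_cSupE)
    have "x \<le> level G c" unfolding level_def A_def[symmetric] using x(1) bounds(3) by (rule cSup_upper)
    then show False using step[of x "level G c"] x by (simp add: A_def)
  qed
  moreover have "c \<le> G (level G c)"
  proof (rule ccontr)
    assume "\<not> c \<le> G (level G c)"
    define x where "x = level G c + (c - G (level G c))"
    have "G x \<le> c" using step[of "level G c" x] \<open>\<not> c \<le> G (level G c)\<close> by (simp add: x_def)
    then have "x \<in> A" using bounds(1) \<open>\<not> c \<le> G (level G c)\<close> by (simp add: A_def x_def)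
    then have "x \<le> level G c" unfolding level_def A_def[symmetric] using bounds(3) by (rule cSup_upper)
    then show False using \<open>\<not> c \<le> G (level G c)\<close> by (simp add: x_def)
  qed
  ultimately show ?thesis by simp
qed

lemma level_antimono:
  assumes "\<And>x. H x \<le> G x" "mono H" "G 0 \<le> c" "0 \<le> B" "c < H B"
  shows "level G c \<le> level H c"
  unfolding level_def
proof (rule cSup_subset_mono)
  show "{x. 0 \<le> x \<and> G x \<le> c} \<noteq> {}" using assms(3) by auto
  show "bdd_above {x. 0 \<le> x \<and> H x \<le> c}"
    using level_bounds(3)[OF assms(2) _ assms(4,5)] order_trans[OF assms(1) assms(3)] .
  show "{x. 0 \<le> x \<and> G x \<le> c} \<subseteq> {x. 0 \<le> x \<and> H x \<le> c}"
    using assms(1) order_trans by blast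
qed

text \<open>G w w' is the mean power a user spends at its own water level w while the other user's
  level is w'.\<close>
locale mean_power_map =
  fixes G :: "real \<Rightarrow> real \<Rightarrow> real"
  assumes mono_own: "mono (\<lambda>w. G w w')"
    and antimono_other: "antimono (G w)"
    and lipschitz_own: "1-lipschitz_on UNIV (\<lambda>w. G w w')"
    and le_max: "G w w' \<le> max 0 w"
begin

lemma level_solves:
  assumes "0 \<le> c" "0 \<le> B" "c < G B w'"
  shows "G (level (\<lambda>w. G w w') c) w' = c"
    and "0 \<le> level (\<lambda>w. G w w') c" "level (\<lambda>w. G w w') c \<le> B"
proof -
  have "G 0 w' \<le> c" using le_max[of 0 w'] \<open>0 \<le> c\<close> by simp
  then show "G (level (\<lambda>w. G w w') c) w' = c"
    and "0 \<le> level (\<lambda>w. G w w') c" "level (\<lambda>w. G w w') c \<le> B"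
    using level_eq[OF mono_own lipschitz_own _ assms(2,3)] level_bounds[OF mono_own _ assms(2,3)]
    by auto
qed

lemma level_mono_other:
  assumes "v' \<le> w'" "0 \<le> c" "0 \<le> B" "c < G B w'"
  shows "level (\<lambda>w. G w v') c \<le> level (\<lambda>w. G w w') c"
proof (rule level_antimono[OF _ mono_own _ assms(3,4)])
  show "G x w' \<le> G x v'" for x using antimono_other assms(1) by (auto dest: antimonoD)
  show "G 0 v' \<le> c" using le_max[of 0 v'] assms(2) by simp
qed

lemma level_map:
  assumes "0 < a" "0 \<le> b" "0 \<le> k" "0 \<le> c"
    and growth: "\<And>w w'. a * (w - b) \<le> G w w' + k * max 0 w'"
  shows "G (level (\<lambda>w. G w w') c) w' = c" "0 \<le> level (\<lambda>w. G w w') c"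
    and "mono (\<lambda>w'. level (\<lambda>w. G w w') c)"
proof -
  define B where "B w' = b + (c + k * max 0 w' + 1) / a" for w'
  have B_nonneg: "0 \<le> B w'" for w' using assms(1-4) by (simp add: B_def)
  have exceeds: "c < G (B w') w'" for w'
  proof -
    have "a * (B w' - b) = c + k * max 0 w' + 1" using \<open>0 < a\<close> by (simp add: B_def)
    then show ?thesis using growth[of "B w'" w'] by linarith
  qed
  show "G (level (\<lambda>w. G w w') c) w' = c" "0 \<le> level (\<lambda>w. G w w') c"
    using level_solves[OF \<open>0 \<le> c\<close> B_nonneg exceeds] by simp_all
  show "mono (\<lambda>w'. level (\<lambda>w. G w w') c)"
    using level_mono_other[OF _ \<open>0 \<le> c\<close> B_nonneg exceeds] by (auto intro: monoI)
qed

end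

lemma joint_levels_exist:
  assumes "mean_power_map G1" "mean_power_map G2"
    and growth1: "\<And>w w' v. a * (w - b) \<le> G1 w w' + k * G2 w' v"
    and growth2: "\<And>w w' v. a * (w - b) \<le> G2 w w' + k * G1 w' v"
    and "0 < a" "0 \<le> b" "0 \<le> k" "0 < c1" "0 < c2"
  shows "\<exists>w1 w2. 0 < w1 \<and> 0 < w2 \<and> G1 w1 w2 = c1 \<and> G2 w2 w1 = c2"
proof -
  interpret G1: mean_power_map G1 by fact
  interpret G2: mean_power_map G2 by fact
  have growth1': "a * (w - b) \<le> G1 w w' + k * max 0 w'" for w w'
    using growth1[of w w' 0] mult_left_mono[OF G2.le_max[of w' 0] \<open>0 \<le> k\<close>] by linarith
  have growth2': "a * (w - b) \<le> G2 w w' + k * max 0 w'" for w w'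
    using growth2[of w w' 0] mult_left_mono[OF G1.le_max[of w' 0] \<open>0 \<le> k\<close>] by linarith
  define \<phi> where "\<phi> = (\<lambda>w2. level (\<lambda>w. G1 w w2) c1)"
  define \<psi> where "\<psi> = (\<lambda>w1. level (\<lambda>w. G2 w w1) c2)"
  note \<phi> = G1.level_map[OF assms(5-7) less_imp_le[OF \<open>0 < c1\<close>] growth1', folded \<phi>_def]
  note \<psi> = G2.level_map[OF assms(5-7) less_imp_le[OF \<open>0 < c2\<close>] growth2', folded \<psi>_def]
  define W where "W = b + (c2 + k * c1 + 1) / a"
  have "0 \<le> W" using \<open>0 < a\<close> \<open>0 \<le> b\<close> \<open>0 \<le> k\<close> \<open>0 < c1\<close> \<open>0 < c2\<close> by (simp add: W_def)
  have "\<psi> (\<phi> w2) \<le> W" for w2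
  proof -
    have "a * (W - b) \<le> G2 W (\<phi> w2) + k * c1"
      using growth2[of W "\<phi> w2" w2] \<phi>(1)[of w2] by (simp add: \<phi>_def)
    then have "c2 < G2 W (\<phi> w2)" using \<open>0 < a\<close> by (simp add: W_def)
    then show ?thesis
      unfolding \<psi>_def using G2.level_solves(3) \<open>0 \<le> W\<close> \<open>0 < c2\<close> by simp
  qed
  then obtain w2 where "w2 \<in> {0..W}" and fixpoint: "\<psi> (\<phi> w2) = w2"
    using mono_on_interval_has_fixpoint[of 0 W "\<psi> \<circ> \<phi>"] \<open>0 \<le> W\<close> \<psi>(2)
      monoD[OF \<psi>(3) monoD[OF \<phi>(3)]] by (auto simp: mono_on_def \<psi>_def)
  have "G1 (\<phi> w2) w2 = c1" "G2 w2 (\<phi> w2) = c2"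
    using \<phi>(1)[of w2] \<psi>(1)[of "\<phi> w2"] fixpoint by (auto simp: \<phi>_def \<psi>_def)
  moreover have "0 < \<phi> w2" "0 < w2"
    using G1.le_max[of "\<phi> w2" w2] G2.le_max[of w2 "\<phi> w2"] calculation \<open>0 < c1\<close> \<open>0 < c2\<close> by auto
  ultimately show ?thesis by blast
qed

section \<open>Water-filling\<close>

definition waterfill :: "real \<Rightarrow> real \<Rightarrow> real" where
  "waterfill w c = max 0 (w - c)"

lemma waterfill_nonneg: "0 \<le> waterfill w c"
  by (simp add: waterfill_def)

lemma waterfill_le_level: "0 \<le> c \<Longrightarrow> waterfill w c \<le> max 0 w"
  by (simp add: waterfill_def)

lemma waterfill_le_plus:
  assumes "w - c \<le> v - c' + e" "0 \<le> e"
  shows "waterfill w c \<le> waterfill v c' + e"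
  using assms by (simp add: waterfill_def)

text \<open>The multiplier 1/(2 ln 2 w) is the one whose water-filling level is w.\<close>
lemma waterfill_maximizes_lagrangian:
  fixes g N w q :: real
  assumes "0 < g" "0 < N" "0 < w" "0 \<le> q"
  defines "p \<equiv> waterfill w (N / g)"
  shows "1/2 * log 2 (1 + q * g / N) - q / (2 * ln 2 * w)
    \<le> 1/2 * log 2 (1 + p * g / N) - p / (2 * ln 2 * w)"
proof -
  have "0 \<le> p" by (simp add: p_def waterfill_nonneg)
  then have pos: "0 < N + p * g" "0 < N + q * g" using assms by (simp_all add: add_pos_nonneg)
  have "ln (1 + q * g / N) - ln (1 + p * g / N) = ln ((N + q * g) / (N + p * g))"
    using pos assms(2) by (simp add: ln_div field_simps)
  also have "\<dots> \<le> (N + q * g) / (N + p * g) - 1"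
    using pos by (intro ln_le_minus_one) simp
  also have "\<dots> = (q - p) * g / (N + p * g)"
    using pos by (simp add: field_simps)
  also have "\<dots> \<le> (q - p) / w"
  proof (cases "N / g < w")
    case True
    then have "N + p * g = w * g" using assms by (simp add: p_def waterfill_def field_simps)
    then show ?thesis using assms by simp
  next
    case False
    then have "p = 0" "w * g \<le> N" using assms by (simp_all add: p_def waterfill_def field_simps)
    have "q * (w * g) \<le> q * N" using \<open>w * g \<le> N\<close> assms(4) by (rule mult_left_mono)
    then show ?thesis using assms \<open>p = 0\<close> by (simp add: field_simps)
  qed
  finally have "ln (1 + q * g / N) - q / w \<le> ln (1 + p * g / N) - p / w"
    by (simp add: diff_divide_distrib)
  then have "(ln (1 + q * g / N) - q / w) / (2 * ln 2) \<le> (ln (1 + p * g / N) - p / w) / (2 * ln 2)"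
    by (rule divide_right_mono) (use ln_ge_zero[of "2::real"] in simp)
  then show ?thesis by (simp add: log_def diff_divide_distrib mult_ac)
qed


lemma waterfill_measurable [measurable]:
  "g \<in> borel_measurable M \<Longrightarrow> N \<in> borel_measurable M \<Longrightarrow>
    (\<lambda>h. waterfill w (N h / g h)) \<in> borel_measurable M"
  unfolding waterfill_def by (intro borel_measurable_max borel_measurable_diff borel_measurable_divide) auto

section \<open>Expectations under the fading density\<close>

lemma state_space_borel [measurable]: "state_space \<in> sets borel"
  unfolding state_space_def by (intro borel_open open_Times) auto

lemma fst_snd_borel_measurable [measurable]:
  "(fst :: real \<times> real \<Rightarrow> real) \<in> borel_measurable borel"
  "(snd :: real \<times> real \<Rightarrow> real) \<in> borel_measurable borel"
  by (intro borel_measurable_continuous_onI continuous_intros)+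

definition expect :: "(real \<times> real \<Rightarrow> real) \<Rightarrow> (real \<times> real \<Rightarrow> real) \<Rightarrow> ennreal" where
  "expect f X = (\<integral>\<^sup>+ h\<in>state_space. ennreal (X h * f h) \<partial>lborel)"

definition exhausting_square :: "nat \<Rightarrow> (real \<times> real) set" where
  "exhausting_square n = {1 / real (Suc n)..real (Suc n)} \<times> {1 / real (Suc n)..real (Suc n)}"

lemma exhausting_square_borel [measurable]: "exhausting_square n \<in> sets borel"
  unfolding exhausting_square_def by (intro borel_closed closed_Times) auto

lemma state_space_subset_exhausting_squares: "state_space \<subseteq> (\<Union>n. exhausting_square n)"
proof
  fix h assume "h \<in> state_space"
  then obtain a b where h: "h = (a, b)" "0 < a" "0 < b" by (auto simp: state_space_def)
  obtain n1 where n1: "inverse (real n1) < min a b" "0 < n1"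
    using ex_inverse_of_nat_less[of "min a b"] h by auto
  obtain n2 where n2: "max a b < real n2" using reals_Archimedean2 by blast
  have "1 / real (Suc (n1 + n2)) \<le> 1 / real n1" using n1(2) by (intro divide_left_mono) auto
  then show "h \<in> (\<Union>n. exhausting_square n)"
    using n1 n2 unfolding h exhausting_square_def
    by (intro UN_I[of "n1 + n2"]) (auto simp: inverse_eq_divide)
qed

locale fading_channel =
  fixes f :: "real \<times> real \<Rightarrow> real"
  assumes density: "fading_density f"
begin

lemma density_measurable [measurable]: "f \<in> borel_measurable borel"
  using density by (simp add: fading_density_def)

lemma density_nonneg: "h \<in> state_space \<Longrightarrow> 0 \<le> f h"
  using density by (simp add: fading_density_def)

lemma expect_mono:
  assumes "\<And>h. h \<in> state_space \<Longrightarrow> X h \<le> Y h"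
  shows "expect f X \<le> expect f Y"
  unfolding expect_def
proof (intro nn_integral_mono)
  fix h
  show "ennreal (X h * f h) * indicator state_space h \<le> ennreal (Y h * f h) * indicator state_space h"
    using assms[of h] density_nonneg[of h] by (cases "h \<in> state_space") (auto intro!: ennreal_leI mult_right_mono)
qed

lemma expect_cmult:
  assumes "0 \<le> c" "X \<in> borel_measurable borel"
  shows "expect f (\<lambda>h. c * X h) = ennreal c * expect f X"
proof -
  have "expect f (\<lambda>h. c * X h) = (\<integral>\<^sup>+ h. ennreal c * (ennreal (X h * f h) * indicator state_space h) \<partial>lborel)"
    unfolding expect_def using assms(1) by (simp add: ennreal_mult' mult.assoc)
  also have "\<dots> = ennreal c * expect f X"
    unfolding expect_def using assms(2) by (intro nn_integral_cmult) simp
  finally show ?thesis .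
qed

lemma expect_add:
  assumes "X \<in> borel_measurable borel" "Y \<in> borel_measurable borel"
    and "\<And>h. h \<in> state_space \<Longrightarrow> 0 \<le> X h" "\<And>h. h \<in> state_space \<Longrightarrow> 0 \<le> Y h"
  shows "expect f (\<lambda>h. X h + Y h) = expect f X + expect f Y"
proof -
  have "ennreal ((X h + Y h) * f h) = ennreal (X h * f h) + ennreal (Y h * f h)"
    if "h \<in> state_space" for h
    using assms(3,4) density_nonneg that by (simp add: distrib_right ennreal_plus)
  then have "expect f (\<lambda>h. X h + Y h) =
      (\<integral>\<^sup>+ h. ennreal (X h * f h) * indicator state_space h
        + ennreal (Y h * f h) * indicator state_space h \<partial>lborel)"
    unfolding expect_def by (intro nn_integral_cong) (simp add: indicator_def)
  also have "\<dots> = expect f X + expect f Y"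
    unfolding expect_def using assms(1,2) by (intro nn_integral_add) simp_all
  finally show ?thesis .
qed

lemma expect_const: "0 \<le> c \<Longrightarrow> expect f (\<lambda>_. c) = ennreal c"
  using expect_cmult[of c "\<lambda>_. 1"] density by (simp add: expect_def fading_density_def)

lemma expect_add_cmult:
  assumes [measurable]: "X \<in> borel_measurable borel" "Y \<in> borel_measurable borel"
    and "0 \<le> c" "\<And>h. h \<in> state_space \<Longrightarrow> 0 \<le> X h \<and> 0 \<le> Y h"
  shows "expect f (\<lambda>h. X h + c * Y h) = expect f X + ennreal c * expect f Y"
proof -
  have "expect f (\<lambda>h. X h + c * Y h) = expect f X + expect f (\<lambda>h. c * Y h)"
    using assms(3,4) by (intro expect_add) auto
  then show ?thesis by (simp add: expect_cmult[OF \<open>0 \<le> c\<close>])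
qed

lemma expect_le_plus_const:
  assumes "Y \<in> borel_measurable borel" "\<And>h. h \<in> state_space \<Longrightarrow> 0 \<le> Y h" "0 \<le> d"
    and "\<And>h. h \<in> state_space \<Longrightarrow> X h \<le> Y h + d"
  shows "expect f X \<le> expect f Y + ennreal d"
proof -
  have "expect f X \<le> expect f (\<lambda>h. Y h + d)" using assms(4) by (rule expect_mono)
  also have "\<dots> = expect f Y + ennreal d"
    using assms(1-3) by (simp add: expect_add expect_const)
  finally show ?thesis .
qed

lemma expect_bounded:
  assumes "\<And>h. h \<in> state_space \<Longrightarrow> X h \<le> B" "0 \<le> B"
  shows "expect f X \<le> ennreal B" "expect f X < \<infinity>"
proof -
  show "expect f X \<le> ennreal B" using expect_mono[OF assms(1)] expect_const[OF assms(2)] by simp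
  then show "expect f X < \<infinity>" by (simp add: le_less_trans)
qed

lemma enn2real_expect_le_plus_const:
  assumes "Y \<in> borel_measurable borel" "\<And>h. h \<in> state_space \<Longrightarrow> 0 \<le> Y h \<and> Y h \<le> B"
    and "0 \<le> d" "\<And>h. h \<in> state_space \<Longrightarrow> X h \<le> Y h + d"
  shows "enn2real (expect f X) \<le> enn2real (expect f Y) + d"
proof -
  have "0 \<le> B" using assms(2)[of "(1, 1)"] by (simp add: state_space_def)
  then have fin: "expect f Y < \<infinity>" using assms(2) by (intro expect_bounded(2)) auto
  have "enn2real (expect f X) \<le> enn2real (expect f Y + ennreal d)"
    using expect_le_plus_const[OF assms(1) _ assms(3,4)] assms(2) fin by (intro enn2real_mono) auto
  also have "\<dots> = enn2real (expect f Y) + d"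
    using fin \<open>0 \<le> d\<close> by (simp add: enn2real_plus)
  finally show ?thesis .
qed

lemma exhausting_square_expect_nonzero: "\<exists>n. expect f (indicator (exhausting_square n)) \<noteq> 0"
proof (rule ccontr)
  let ?K = exhausting_square
  assume "\<nexists>n. expect f (indicator (?K n)) \<noteq> 0"
  then have "AE h in lborel. ennreal (indicator (?K n) h * f h) * indicator state_space h = 0" for n
    by (intro nn_integral_0_iff_AE[THEN iffD1]) (auto simp: expect_def)
  then have "AE h in lborel. \<forall>n. ennreal (indicator (?K n) h * f h) * indicator state_space h = 0"
    by (simp only: AE_all_countable) blast
  then have "AE h in lborel. ennreal (1 * f h) * indicator state_space h = 0"
  proof eventually_elim
    case (elim h)
    show ?case
    proof (cases "h \<in> state_space")
      case True
      then obtain n where "h \<in> ?K n" using state_space_subset_exhausting_squares by blast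
      then show ?thesis using elim[rule_format, of n] by simp
    qed simp
  qed
  then have "expect f (\<lambda>_. 1) = 0"
    unfolding expect_def by (intro nn_integral_0_iff_AE[THEN iffD2]) auto
  then show False using expect_const[of 1] by simp
qed

lemma square_of_positive_mass:
  "\<exists>d M p. 0 < d \<and> 0 < M \<and> 0 < p \<and> expect f (indicator ({d..M} \<times> {d..M})) = ennreal p"
proof -
  obtain n where n: "expect f (indicator (exhausting_square n)) \<noteq> 0"
    using exhausting_square_expect_nonzero by blast
  define p where "p = enn2real (expect f (indicator (exhausting_square n)))"
  have "expect f (indicator (exhausting_square n)) < \<infinity>"
    by (rule expect_bounded(2)[of _ 1]) (auto simp: indicator_def)
  then have "expect f (indicator (exhausting_square n)) = ennreal p" "0 < p"
    using n by (auto simp: p_def enn2real_positive_iff intro: gr_zeroI)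
  then show ?thesis
    unfolding exhausting_square_def
    by (intro exI[of _ "1 / real (Suc n)"] exI[of _ "real (Suc n)"] exI[of _ p]) simp
qed

lemma waterfill_maximizes_expected_rate:
  assumes "0 < w" and [measurable]: "g \<in> borel_measurable borel" "N \<in> borel_measurable borel"
    and pos: "\<And>h. h \<in> state_space \<Longrightarrow> 0 < g h \<and> 0 < N h"
    and P: "P = (\<lambda>h. waterfill w (N h / g h))" and "expect f P = ennreal Pbar"
    and "feasible f Pbar Q"
  shows "expect f (\<lambda>h. 1/2 * log 2 (1 + Q h * g h / N h))
    \<le> expect f (\<lambda>h. 1/2 * log 2 (1 + P h * g h / N h))"
proof -
  have [measurable]: "Q \<in> borel_measurable borel" and Q_nonneg: "\<And>h. h \<in> state_space \<Longrightarrow> 0 \<le> Q h"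
    and "expect f Q \<le> expect f P"
    using \<open>feasible f Pbar Q\<close> \<open>expect f P = ennreal Pbar\<close> by (auto simp: feasible_def expect_def)
  define c where "c = 1 / (2 * ln 2 * w)"
  define R where "R X = (\<lambda>h. 1/2 * log 2 (1 + X h * g h / N h))" for X
  have [measurable]: "P \<in> borel_measurable borel" unfolding P by measurable
  have "0 \<le> c" using \<open>0 < w\<close> by (simp add: c_def)
  have P_nonneg: "0 \<le> P h" for h by (simp add: P waterfill_nonneg)
  have R_nonneg: "0 \<le> R X h" if "h \<in> state_space" "0 \<le> X h" for X h
  proof -
    have "0 \<le> X h * g h / N h" using pos[OF that(1)] that(2) by simp
    then show ?thesis by (simp add: R_def)
  qed
  have lagrangian: "R Q h + c * P h \<le> R P h + c * Q h" if "h \<in> state_space" for h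
    using waterfill_maximizes_lagrangian[of "g h" "N h" w "Q h"] pos[OF that] \<open>0 < w\<close> Q_nonneg[OF that]
    by (simp add: R_def P c_def)
  have [measurable]: "R Q \<in> borel_measurable borel" "R P \<in> borel_measurable borel"
    unfolding R_def by measurable
  have "expect f (R Q) + ennreal c * expect f P = expect f (\<lambda>h. R Q h + c * P h)"
    using R_nonneg Q_nonneg P_nonneg \<open>0 \<le> c\<close> by (intro expect_add_cmult[symmetric]) auto
  also have "\<dots> \<le> expect f (\<lambda>h. R P h + c * Q h)"
    using lagrangian by (rule expect_mono)
  also have "\<dots> = expect f (R P) + ennreal c * expect f Q"
    using R_nonneg Q_nonneg P_nonneg \<open>0 \<le> c\<close> by (intro expect_add_cmult) auto
  also have "\<dots> \<le> expect f (R P) + ennreal c * expect f P"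
    using \<open>expect f Q \<le> expect f P\<close> by (intro add_left_mono mult_left_mono) simp_all
  finally have "ennreal c * expect f P + expect f (R Q) \<le> ennreal c * expect f P + expect f (R P)"
    by (simp add: add.commute)
  moreover have "ennreal c * expect f P \<noteq> \<infinity>"
    using \<open>expect f P = ennreal Pbar\<close> by (simp add: ennreal_mult_eq_top_iff)
  ultimately have "expect f (R Q) \<le> expect f (R P)" by (simp add: ennreal_add_left_cancel_le)
  then show ?thesis by (simp add: R_def)
qed

end

section \<open>Joint water-filling policies\<close>

text \<open>Joint water-filling: on E the other user (gain g', level w') is decoded second, so it sees
  only noise and water-fills above the floor \<sigma>2/g'; this user water-fills against noise plus that
  interference.\<close>
definition waterfill_policy :: "real \<Rightarrow> (real \<times> real) set \<Rightarrow> (real \<times> real \<Rightarrow> real) \<Rightarrow> (real \<times> real \<Rightarrow> real)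
    \<Rightarrow> real \<Rightarrow> real \<Rightarrow> real \<times> real \<Rightarrow> real" where
  "waterfill_policy \<sigma>2 E g g' w w' h =
     waterfill w ((\<sigma>2 + waterfill w' (\<sigma>2 / g' h) * g' h * indicator E h) / g h)"

definition policy_mean :: "(real \<times> real \<Rightarrow> real) \<Rightarrow> real \<Rightarrow> (real \<times> real) set \<Rightarrow> (real \<times> real \<Rightarrow> real)
    \<Rightarrow> (real \<times> real \<Rightarrow> real) \<Rightarrow> real \<Rightarrow> real \<Rightarrow> real" where
  "policy_mean f \<sigma>2 E g g' w w' = enn2real (expect f (waterfill_policy \<sigma>2 E g g' w w'))"

lemma waterfill_policy_nonneg: "0 \<le> waterfill_policy \<sigma>2 E g g' w w' h"
  by (simp add: waterfill_policy_def waterfill_nonneg)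

lemma waterfill_policy_against_other:
  "waterfill_policy \<sigma>2 E g g' w w' h =
     waterfill w ((\<sigma>2 + waterfill_policy \<sigma>2 (- E) g' g w' v h * g' h * indicator E h) / g h)"
  by (simp add: waterfill_policy_def indicator_def)

locale waterfilling_pair = fading_channel +
  fixes \<sigma>2 :: real and E :: "(real \<times> real) set" and g g' :: "real \<times> real \<Rightarrow> real"
  assumes noise_pos: "0 < \<sigma>2" and interference_set_borel [measurable]: "E \<in> sets borel"
    and gains_measurable [measurable]: "g \<in> borel_measurable borel" "g' \<in> borel_measurable borel"
    and gains_pos: "\<And>h. h \<in> state_space \<Longrightarrow> 0 < g h \<and> 0 < g' h"
begin

lemma swap_users: "waterfilling_pair f \<sigma>2 (- E) g' g"
  using gains_pos by unfold_locales (auto simp: density noise_pos)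

lemma waterfill_policy_measurable [measurable]:
  "waterfill_policy \<sigma>2 E g g' w w' \<in> borel_measurable borel"
  unfolding waterfill_policy_def waterfill_def by measurable

lemma waterfill_policy_le_level:
  assumes "h \<in> state_space"
  shows "waterfill_policy \<sigma>2 E g g' w w' h \<le> max 0 w"
  unfolding waterfill_policy_def using gains_pos[OF assms] noise_pos
  by (intro waterfill_le_level divide_nonneg_pos add_nonneg_nonneg mult_nonneg_nonneg waterfill_nonneg) auto

lemma waterfill_policy_le_plus:
  assumes "h \<in> state_space" "w \<le> v + e" "v' \<le> w'" "0 \<le> e"
  shows "waterfill_policy \<sigma>2 E g g' w w' h \<le> waterfill_policy \<sigma>2 E g g' v v' h + e"
proof -
  have "waterfill v' (\<sigma>2 / g' h) \<le> waterfill w' (\<sigma>2 / g' h)"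
    using assms(3) waterfill_le_plus[of v' _ w' _ 0] by simp
  then have "waterfill v' (\<sigma>2 / g' h) * g' h * indicator E h
      \<le> waterfill w' (\<sigma>2 / g' h) * g' h * indicator E h"
    using gains_pos[OF assms(1)] by (intro mult_right_mono) (auto simp: indicator_def)
  then have "(\<sigma>2 + waterfill v' (\<sigma>2 / g' h) * g' h * indicator E h) / g h
      \<le> (\<sigma>2 + waterfill w' (\<sigma>2 / g' h) * g' h * indicator E h) / g h"
    using gains_pos[OF assms(1)] by (intro divide_right_mono) auto
  then show ?thesis
    unfolding waterfill_policy_def using assms(2,4) by (intro waterfill_le_plus) auto
qed

lemma expect_waterfill_policy:
  "expect f (waterfill_policy \<sigma>2 E g g' w w') = ennreal (policy_mean f \<sigma>2 E g g' w w')"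
  using expect_bounded(2)[OF waterfill_policy_le_level] by (simp add: policy_mean_def less_top)

lemma feasible_waterfill_policy:
  "feasible f (policy_mean f \<sigma>2 E g g' w w') (waterfill_policy \<sigma>2 E g g' w w')"
  using expect_waterfill_policy waterfill_policy_nonneg by (simp add: feasible_def expect_def)

lemma policy_mean_le_plus:
  assumes "w \<le> v + e" "v' \<le> w'" "0 \<le> e"
  shows "policy_mean f \<sigma>2 E g g' w w' \<le> policy_mean f \<sigma>2 E g g' v v' + e"
  unfolding policy_mean_def using waterfill_policy_nonneg waterfill_policy_le_level waterfill_policy_le_plus assms
  by (intro enn2real_expect_le_plus_const) auto

lemma mean_power_map_policy_mean: "mean_power_map (policy_mean f \<sigma>2 E g g')"
proof
  show "mono (\<lambda>w. policy_mean f \<sigma>2 E g g' w w')" for w'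
    using policy_mean_le_plus[of _ _ 0] by (auto intro: monoI)
  show "antimono (policy_mean f \<sigma>2 E g g' w)" for w
    using policy_mean_le_plus[of _ _ 0] by (auto intro: antimonoI)
  show "1-lipschitz_on UNIV (\<lambda>w. policy_mean f \<sigma>2 E g g' w w')" for w'
  proof (rule lipschitz_onI)
    fix x y :: real
    have "x \<le> y + \<bar>x - y\<bar>" "y \<le> x + \<bar>x - y\<bar>" by arith+
    then show "dist (policy_mean f \<sigma>2 E g g' x w') (policy_mean f \<sigma>2 E g g' y w') \<le> 1 * dist x y"
      using policy_mean_le_plus[of x y "\<bar>x - y\<bar>" w' w'] policy_mean_le_plus[of y x "\<bar>x - y\<bar>" w' w']
      by (simp add: dist_real_def abs_le_iff)
  qed simp
  show "policy_mean f \<sigma>2 E g g' w w' \<le> max 0 w" for w w'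
    unfolding policy_mean_def using expect_bounded(1)[OF waterfill_policy_le_level]
    by (intro enn2real_leI) auto
qed

lemma waterfill_floor_le_policies:
  assumes "h \<in> state_space" "0 < d" "d \<le> g h" "g' h \<le> M"
  shows "waterfill w (\<sigma>2 / d)
    \<le> waterfill_policy \<sigma>2 E g g' w w' h + M / d * waterfill_policy \<sigma>2 (- E) g' g w' v h"
proof -
  define u where "u = waterfill_policy \<sigma>2 (- E) g' g w' v h"
  have "0 \<le> u" by (simp add: u_def waterfill_policy_nonneg)
  have "u * g' h * indicator E h \<le> M * u"
    using assms(4) gains_pos[OF assms(1)] \<open>0 \<le> u\<close> mult_left_mono[of "g' h" M u]
    by (auto simp: indicator_def mult.commute)
  then have "(\<sigma>2 + u * g' h * indicator E h) / g h \<le> (\<sigma>2 + M * u) / d"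
    using assms(2-4) gains_pos[OF assms(1)] \<open>0 \<le> u\<close> noise_pos by (intro frac_le) auto
  also have "\<dots> = \<sigma>2 / d + M / d * u" by (simp add: add_divide_distrib)
  finally show ?thesis
    unfolding waterfill_policy_against_other[of _ _ _ _ w w' h v] u_def[symmetric]
    using assms gains_pos[OF assms(1)] \<open>0 \<le> u\<close>
    by (intro waterfill_le_plus) (auto intro: order_trans[OF _ assms(4)])
qed

lemma policy_mean_growth:
  assumes "0 < d" "0 \<le> M" "K \<in> sets borel" "\<And>h. h \<in> K \<Longrightarrow> d \<le> g h \<and> g' h \<le> M"
    and "expect f (indicator K) = ennreal p" "0 \<le> p"
  shows "p * (w - \<sigma>2 / d)
    \<le> policy_mean f \<sigma>2 E g g' w w' + M / d * policy_mean f \<sigma>2 (- E) g' g w' v"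
proof -
  interpret other: waterfilling_pair f \<sigma>2 "- E" g' g by (rule swap_users)
  define c where "c = waterfill w (\<sigma>2 / d)"
  let ?P = "waterfill_policy \<sigma>2 E g g' w w'" and ?P' = "waterfill_policy \<sigma>2 (- E) g' g w' v"
  let ?F = "policy_mean f \<sigma>2 E g g' w w'" and ?F' = "policy_mean f \<sigma>2 (- E) g' g w' v"
  have "0 \<le> c" by (simp add: c_def waterfill_nonneg)
  have "0 \<le> M / d" using assms(1,2) by simp
  have "0 \<le> ?P h + M / d * ?P' h" for h
    using \<open>0 \<le> M / d\<close> by (intro add_nonneg_nonneg mult_nonneg_nonneg waterfill_policy_nonneg)
  then have pointwise: "c * indicator K h \<le> ?P h + M / d * ?P' h" if "h \<in> state_space" for h
    using waterfill_floor_le_policies[OF that \<open>0 < d\<close>] assms(4)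
    by (cases "h \<in> K") (auto simp: c_def)
  have "ennreal (c * p) = expect f (\<lambda>h. c * indicator K h)"
    using assms(3,5) \<open>0 \<le> c\<close> by (simp add: expect_cmult ennreal_mult')
  also have "\<dots> \<le> expect f (\<lambda>h. ?P h + M / d * ?P' h)"
    using pointwise by (rule expect_mono)
  also have "\<dots> = ennreal ?F + ennreal (M / d) * ennreal ?F'"
    using \<open>0 \<le> M / d\<close> waterfill_policy_nonneg
    unfolding expect_waterfill_policy[symmetric] other.expect_waterfill_policy[symmetric]
    by (intro expect_add_cmult) auto
  also have "\<dots> = ennreal (?F + M / d * ?F')"
    using \<open>0 \<le> M / d\<close> by (simp add: policy_mean_def ennreal_mult' del: times_divide_eq_left)
  finally have "c * p \<le> ?F + M / d * ?F'"
    using \<open>0 \<le> M / d\<close> ennreal_le_iff[of "?F + M / d * ?F'"]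
    by (simp add: policy_mean_def mult_nonneg_nonneg del: times_divide_eq_left)
  moreover have "p * (w - \<sigma>2 / d) \<le> c * p"
    using \<open>0 \<le> p\<close> by (simp add: c_def waterfill_def mult_left_mono mult.commute)
  ultimately show ?thesis by linarith
qed

end

context fading_channel
begin

lemma waterfilling_pair_users:
  assumes "0 < \<sigma>2" "D \<in> sets borel"
  shows "waterfilling_pair f \<sigma>2 D fst snd" "waterfilling_pair f \<sigma>2 (- D) snd fst"
proof -
  show user1: "waterfilling_pair f \<sigma>2 D fst snd"
    using assms by unfold_locales (auto simp: density state_space_def)
  show "waterfilling_pair f \<sigma>2 (- D) snd fst"
    using waterfilling_pair.swap_users[OF user1] .
qed

lemma joint_waterfilling_levels_exist:
  assumes "0 < \<sigma>2" "D \<in> sets borel" "0 < Pbar1" "0 < Pbar2"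
  shows "\<exists>w1 w2. 0 < w1 \<and> 0 < w2 \<and> policy_mean f \<sigma>2 D fst snd w1 w2 = Pbar1
    \<and> policy_mean f \<sigma>2 (- D) snd fst w2 w1 = Pbar2"
proof -
  interpret user1: waterfilling_pair f \<sigma>2 D fst snd using waterfilling_pair_users[OF assms(1,2)] by simp
  interpret user2: waterfilling_pair f \<sigma>2 "- D" snd fst using waterfilling_pair_users[OF assms(1,2)] by simp
  obtain d M p where "0 < d" "0 < M" "0 < p"
    and square: "expect f (indicator ({d..M} \<times> {d..M})) = ennreal p"
    using square_of_positive_mass by blast
  have square_borel: "{d..M} \<times> {d..M} \<in> sets borel"
    by (intro borel_closed closed_Times) auto
  show ?thesis
  proof (rule joint_levels_exist[OF user1.mean_power_map_policy_mean user2.mean_power_map_policy_mean])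
    show "p * (w - \<sigma>2 / d)
      \<le> policy_mean f \<sigma>2 D fst snd w w' + M / d * policy_mean f \<sigma>2 (- D) snd fst w' v"
      for w w' v
      using user1.policy_mean_growth[OF \<open>0 < d\<close> _ square_borel _ square] \<open>0 < M\<close> \<open>0 < p\<close> by auto
    show "p * (w - \<sigma>2 / d)
      \<le> policy_mean f \<sigma>2 (- D) snd fst w w' + M / d * policy_mean f \<sigma>2 D fst snd w' v"
      for w w' v
      using user2.policy_mean_growth[OF \<open>0 < d\<close> _ square_borel _ square] \<open>0 < M\<close> \<open>0 < p\<close> by auto
  qed (use \<open>0 < p\<close> \<open>0 < d\<close> \<open>0 < M\<close> assms in auto)
qed

end

theorem theorem2:
  fixes f :: "real \<times> real \<Rightarrow> real" and \<sigma>2 Pbar1 Pbar2 :: real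
    and D1 :: "(real \<times> real) set"
  assumes "fading_density f"
    and "\<sigma>2 > 0" and "Pbar1 > 0" and "Pbar2 > 0"
    and "D1 \<in> sets borel" and "D1 \<subseteq> state_space"
  shows "\<exists>P1 P2. nash_equilibrium f \<sigma>2 Pbar1 Pbar2 D1 P1 P2"
proof -
  interpret fading_channel f by unfold_locales fact
  interpret user1: waterfilling_pair f \<sigma>2 D1 fst snd using waterfilling_pair_users assms by simp
  interpret user2: waterfilling_pair f \<sigma>2 "- D1" snd fst using waterfilling_pair_users assms by simp
  obtain w1 w2 where "0 < w1" "0 < w2"
    and budget1: "policy_mean f \<sigma>2 D1 fst snd w1 w2 = Pbar1"
    and budget2: "policy_mean f \<sigma>2 (- D1) snd fst w2 w1 = Pbar2"
    using joint_waterfilling_levels_exist assms by blast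
  define P1 where "P1 = waterfill_policy \<sigma>2 D1 fst snd w1 w2"
  define P2 where "P2 = waterfill_policy \<sigma>2 (- D1) snd fst w2 w1"
  have P1: "P1 = (\<lambda>h. waterfill w1 ((\<sigma>2 + P2 h * snd h * indicator D1 h) / fst h))"
    unfolding P1_def P2_def by (rule ext, rule waterfill_policy_against_other)
  have P2: "P2 = (\<lambda>h. waterfill w2 ((\<sigma>2 + P1 h * fst h * indicator (- D1) h) / snd h))"
    unfolding P1_def P2_def using waterfill_policy_against_other[of \<sigma>2 "- D1" snd fst w2 w1 _ w2]
    by auto
  have E: "expect f P1 = ennreal Pbar1" "expect f P2 = ennreal Pbar2"
    using user1.expect_waterfill_policy[of w1 w2] user2.expect_waterfill_policy[of w2 w1]
    by (simp_all add: P1_def P2_def budget1 budget2)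
  have "feasible f Pbar1 P1" "feasible f Pbar2 P2"
    using user1.feasible_waterfill_policy[of w1 w2] user2.feasible_waterfill_policy[of w2 w1]
    by (simp_all add: P1_def P2_def budget1 budget2)
  moreover have "rate1 f \<sigma>2 D1 Q1 P2 \<le> rate1 f \<sigma>2 D1 P1 P2" if "feasible f Pbar1 Q1" for Q1
    using waterfill_maximizes_expected_rate[OF \<open>0 < w1\<close> _ _ _ P1 E(1) that] waterfill_policy_nonneg assms(2)
    by (auto simp: rate1_def expect_def P2_def state_space_def add_pos_nonneg)
  moreover have "rate2 f \<sigma>2 D1 P1 Q2 \<le> rate2 f \<sigma>2 D1 P1 P2" if "feasible f Pbar2 Q2" for Q2
    using waterfill_maximizes_expected_rate[OF \<open>0 < w2\<close> _ _ _ P2 E(2) that] waterfill_policy_nonneg assms(2)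
    by (auto simp: rate2_def expect_def P1_def state_space_def add_pos_nonneg)
  ultimately show ?thesis unfolding nash_equilibrium_def by blast
qed

end
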